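(* For $n\geqslant 3$, the set $\mathcal{F}_2=\{f_i^{2,k}: i\in\{2,3,\ldots,n\},\ k\in\{3,4,\ldots,n\}\}$ forms a basis of the eigenspace of the Star graph $S_n$ with eigenvalue $n-2$.
   Context: Write a permutation $\pi$ of $\{1,\ldots,n\}$ as $[\pi_1\ldots\pi_n]$ with $\pi_j=\pi(j)$. The Star graph $S_n$ has vertex set $\mathrm{Sym}_n$, and two permutations are adjacent iff one is obtained from the other by exchanging the entries in positions $1$ and $i$ for some $2\le i\le n$ (the Cayley graph of $\mathrm{Sym}_n$ with generators $(1\ i)$, $2\le i\le n$). The eigenspace with eigenvalue $\theta$ is the space of functions $f:\mathrm{Sym}_n\to\mathbb{R}$ with $\theta f(x)=\sum_{y\in N(x)}f(y)$ for all $x$. For $i\in\{1,\ldots,n\}$ and distinct $j,k\in\{2,\ldots,n\}$, $f_i^{j,k}(\pi)=1$ if $\pi_j=i$, $f_i^{j,k}(\pi)=-1$ if $\pi_k=i$, and $f_i^{j,k}(\pi)=0$ otherwise. *)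

theory Defs
  imports "HOL-Combinatorics.Combinatorics" Complex_Main
begin

definition Sym :: "nat \<Rightarrow> (nat \<Rightarrow> nat) set" where
  "Sym n = {p. p permutes {1..n}}"

text \<open>Neighbours of pi in the Star graph: exchange entries in positions 1 and i.\<close>
definition star_nbrs :: "nat \<Rightarrow> (nat \<Rightarrow> nat) \<Rightarrow> (nat \<Rightarrow> nat) set" where
  "star_nbrs n p = {p \<circ> transpose 1 i | i. i \<in> {2..n}}"

definition star_eigenspace :: "nat \<Rightarrow> real \<Rightarrow> ((nat \<Rightarrow> nat) \<Rightarrow> real) set" where
  "star_eigenspace n \<theta> =
     {f. \<forall>x\<in>Sym n. \<theta> * f x = (\<Sum>y\<in>star_nbrs n x. f y)}"

definition fstar :: "nat \<Rightarrow> nat \<Rightarrow> nat \<Rightarrow> (nat \<Rightarrow> nat) \<Rightarrow> real" where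
  "fstar i j k p = (if p j = i then 1 else if p k = i then -1 else 0)"

end

theory Submission
  imports Defs
begin

text \<open>Each \<open>f\<^sub>i\<^sup>2\<^sup>,\<^sup>k\<close> is an eigenfunction by a direct count, since right multiplication by
  \<open>(1 j)\<close> only moves the entries in positions 1 and \<open>j\<close>.
  For an eigenfunction \<open>g\<close> with eigenvalue \<open>n - 2\<close>, consider the fibre sums of \<open>g\<close> over the
  permutations with prescribed values on a set \<open>S\<close> of positions. The eigenvalue equation
  relates the fibre sums for \<open>S\<close> to those for the images of \<open>S\<close> under the transpositions
  \<open>(1 j)\<close>, and a maximum principle then shows by induction on \<open>|S|\<close>: if all marginals
  (\<open>|S| = 1\<close>) vanish, so do all fibre sums with \<open>|S| < n\<close>. For \<open>|S| = n - 1\<close> the fibre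
  sum is a single value of \<open>g\<close>, so \<open>g = 0\<close>.
  The marginals of the \<open>f\<^sub>i\<^sup>2\<^sup>,\<^sup>k\<close> are explicit multiples of the number of permutations with
  two prescribed values. This gives their linear independence, and a combination of them
  with the same marginals as a given eigenfunction, which therefore equals it.\<close>

lemma Sym_finite: "finite (Sym n)"
  unfolding Sym_def by (rule finite_permutations) simp

lemma id_in_Sym: "id \<in> Sym n"
  by (simp add: Sym_def permutes_id)

lemma Sym_inj: "\<pi> \<in> Sym n \<Longrightarrow> inj \<pi>"
  by (auto simp: Sym_def intro: permutes_inj)

lemma Sym_apply: "\<pi> \<in> Sym n \<Longrightarrow> p \<in> {1..n} \<Longrightarrow> \<pi> p \<in> {1..n}"
  unfolding Sym_def by (simp only: mem_Collect_eq permutes_in_image)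

lemma transpose_permutes: "j \<in> {1..(n::nat)} \<Longrightarrow> transpose 1 j permutes {1..n}"
  by (rule permutes_swap_id) auto

lemma comp_in_Sym: "\<pi> \<in> Sym n \<Longrightarrow> \<tau> permutes {1..n} \<Longrightarrow> \<pi> \<circ> \<tau> \<in> Sym n"
  by (auto simp: Sym_def intro: permutes_compose)

lemma sum_Sym_compose_right:
  assumes "\<tau> permutes {1..n}"
  shows "(\<Sum>\<pi>\<in>Sym n. h (\<pi> \<circ> \<tau>)) = (\<Sum>\<pi>\<in>Sym n. (h \<pi> :: 'a::comm_monoid_add))"
  unfolding Sym_def using sum_permutations_compose_right[OF assms, of h] by simp

lemma sum_Sym_compose_left:
  assumes "\<sigma> permutes {1..n}"
  shows "(\<Sum>\<pi>\<in>Sym n. h (\<sigma> \<circ> \<pi>)) = (\<Sum>\<pi>\<in>Sym n. (h \<pi> :: 'a::comm_monoid_add))"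
  unfolding Sym_def using setum_permutations_compose_left[OF assms, of h] by simp

lemma sum_of_bool_Sym_apply:
  assumes "\<pi> \<in> Sym n" "v \<in> {1..n}"
  shows "(\<Sum>j\<in>{1..n}. of_bool (\<pi> j = v)) = (1 :: real)"
proof -
  have p: "\<pi> permutes {1..n}" using assms(1) by (simp add: Sym_def)
  have "{j. \<pi> j = v} = {inv \<pi> v}" using permutes_inverses[OF p] by auto
  moreover have "inv \<pi> v \<in> {1..n}" using permutes_in_image[OF permutes_inv[OF p]] assms(2) by simp
  ultimately show ?thesis by (simp add: Int_absorb1)
qed

lemma sum_star_nbrs:
  assumes "x \<in> Sym n"
  shows "(\<Sum>y\<in>star_nbrs n x. f y) = (\<Sum>j\<in>{2..n}. (f (x \<circ> transpose 1 j) :: 'a::comm_monoid_add))"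
proof -
  have "inj_on (\<lambda>j. x \<circ> transpose 1 j) {2..n}"
  proof (rule inj_onI)
    fix i j assume "x \<circ> transpose 1 i = x \<circ> transpose 1 j"
    then have "x i = x j" by (metis comp_apply transpose_apply_first)
    then show "i = j" using Sym_inj[OF assms] by (simp add: inj_eq)
  qed
  moreover have "star_nbrs n x = (\<lambda>j. x \<circ> transpose 1 j) ` {2..n}"
    by (auto simp: star_nbrs_def)
  ultimately show ?thesis by (simp add: sum.reindex)
qed

lemma sum_transpose_apply:
  assumes "q \<in> {2..n}"
  shows "(\<Sum>j\<in>{2..n}. (h (transpose 1 j q) :: real)) = (real n - 2) * h q + h 1"
proof -
  have "(\<Sum>j\<in>{2..n}. h (transpose 1 j q)) = h (transpose 1 q q) + (\<Sum>j\<in>{2..n} - {q}. h (transpose 1 j q))"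
    using assms by (simp add: sum.remove[of _ q])
  also have "(\<Sum>j\<in>{2..n} - {q}. h (transpose 1 j q)) = (\<Sum>j\<in>{2..n} - {q}. h q)"
    using assms by (intro sum.cong) auto
  finally show ?thesis using assms by (simp add: of_nat_diff)
qed

lemma star_eigenspace_iff:
  "g \<in> star_eigenspace n \<theta> \<longleftrightarrow> (\<forall>\<pi>\<in>Sym n. \<theta> * g \<pi> = (\<Sum>j\<in>{2..n}. g (\<pi> \<circ> transpose 1 j)))"
  by (simp add: star_eigenspace_def sum_star_nbrs)

lemma star_eigenspace_diff_lincomb:
  assumes "f \<in> star_eigenspace n \<theta>" "\<And>x. x \<in> I \<Longrightarrow> h x \<in> star_eigenspace n \<theta>"
  shows "(\<lambda>\<pi>. f \<pi> - (\<Sum>x\<in>I. c x * h x \<pi>)) \<in> star_eigenspace n \<theta>"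
  unfolding star_eigenspace_iff
proof
  fix \<pi> assume \<pi>: "\<pi> \<in> Sym n"
  have "(\<Sum>j\<in>{2..n}. f (\<pi> \<circ> transpose 1 j) - (\<Sum>x\<in>I. c x * h x (\<pi> \<circ> transpose 1 j)))
      = (\<Sum>j\<in>{2..n}. f (\<pi> \<circ> transpose 1 j)) - (\<Sum>x\<in>I. c x * (\<Sum>j\<in>{2..n}. h x (\<pi> \<circ> transpose 1 j)))"
    by (simp add: sum_subtractf sum_distrib_left sum.swap[of _ "{2..n}"])
  also have "\<dots> = \<theta> * f \<pi> - (\<Sum>x\<in>I. c x * (\<theta> * h x \<pi>))"
    using assms \<pi> unfolding star_eigenspace_iff by (intro arg_cong2[where f="(-)"] sum.cong) auto
  finally show "\<theta> * (f \<pi> - (\<Sum>x\<in>I. c x * h x \<pi>)) =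
      (\<Sum>j\<in>{2..n}. f (\<pi> \<circ> transpose 1 j) - (\<Sum>x\<in>I. c x * h x (\<pi> \<circ> transpose 1 j)))"
    by (simp add: algebra_simps sum_distrib_left)
qed

lemma star_eigenspace_weighted_sum:
  assumes "g \<in> star_eigenspace n \<theta>"
  shows "\<theta> * (\<Sum>\<pi>\<in>Sym n. w \<pi> * g \<pi>) = (\<Sum>j\<in>{2..n}. \<Sum>\<pi>\<in>Sym n. w (\<pi> \<circ> transpose 1 j) * g \<pi>)"
proof -
  have "\<theta> * (\<Sum>\<pi>\<in>Sym n. w \<pi> * g \<pi>) = (\<Sum>\<pi>\<in>Sym n. w \<pi> * (\<theta> * g \<pi>))"
    by (simp add: sum_distrib_left algebra_simps)
  also have "\<dots> = (\<Sum>\<pi>\<in>Sym n. \<Sum>j\<in>{2..n}. w \<pi> * g (\<pi> \<circ> transpose 1 j))"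
    using assms unfolding star_eigenspace_iff by (intro sum.cong) (auto simp: sum_distrib_left)
  also have "\<dots> = (\<Sum>j\<in>{2..n}. \<Sum>\<pi>\<in>Sym n. w \<pi> * g (\<pi> \<circ> transpose 1 j))"
    by (rule sum.swap)
  also have "\<dots> = (\<Sum>j\<in>{2..n}. \<Sum>\<pi>\<in>Sym n. w (\<pi> \<circ> transpose 1 j) * g \<pi>)"
  proof (rule sum.cong[OF refl])
    fix j assume "j \<in> {2..n}"
    then have "transpose 1 j permutes {1..n}" by (intro transpose_permutes) auto
    from sum_Sym_compose_right[OF this, of "\<lambda>\<pi>. w (\<pi> \<circ> transpose 1 j) * g \<pi>"]
    show "(\<Sum>\<pi>\<in>Sym n. w \<pi> * g (\<pi> \<circ> transpose 1 j)) = (\<Sum>\<pi>\<in>Sym n. w (\<pi> \<circ> transpose 1 j) * g \<pi>)"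
      by (simp add: comp_assoc)
  qed
  finally show ?thesis .
qed

section \<open>Fibre sums and rigidity of eigenfunctions\<close>

definition fiber_sum :: "nat \<Rightarrow> ((nat \<Rightarrow> nat) \<Rightarrow> real) \<Rightarrow> nat set \<Rightarrow> (nat \<Rightarrow> nat) \<Rightarrow> real" where
  "fiber_sum n g S \<alpha> = (\<Sum>\<pi>\<in>Sym n. of_bool (\<forall>p\<in>S. \<pi> p = \<alpha> p) * g \<pi>)"

lemma fiber_sum_cong: "(\<And>p. p \<in> S \<Longrightarrow> \<alpha> p = \<beta> p) \<Longrightarrow> fiber_sum n g S \<alpha> = fiber_sum n g S \<beta>"
  by (simp add: fiber_sum_def)

lemma abs_fiber_sum_le: "\<bar>fiber_sum n g S \<alpha>\<bar> \<le> (\<Sum>\<pi>\<in>Sym n. \<bar>g \<pi>\<bar>)"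
  unfolding fiber_sum_def by (rule order_trans[OF sum_abs sum_mono]) (simp add: abs_mult)

lemma fiber_sum_eigen:
  assumes "g \<in> star_eigenspace n \<theta>"
  shows "\<theta> * fiber_sum n g S \<alpha> = (\<Sum>j\<in>{2..n}. fiber_sum n g (transpose 1 j ` S) (\<alpha> \<circ> transpose 1 j))"
  unfolding fiber_sum_def using star_eigenspace_weighted_sum[OF assms] by simp

lemma sum_fiber_sum_extend:
  assumes T: "T \<subseteq> {1..n}" and v: "v \<in> {1..n}"
  shows "(\<Sum>j\<in>{1..n} - T. fiber_sum n g (insert j T) (\<alpha>(j := v)))
       = (1 - real (card {j\<in>T. \<alpha> j = v})) * fiber_sum n g T \<alpha>"
proof -
  define agree where "agree \<pi> \<longleftrightarrow> (\<forall>p\<in>T. \<pi> p = \<alpha> p)" for \<pi> :: "nat \<Rightarrow> nat"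
  have finT: "finite T" using T finite_subset by blast
  have extend: "fiber_sum n g (insert j T) (\<alpha>(j := v))
      = (\<Sum>\<pi>\<in>Sym n. of_bool (\<pi> j = v) * (of_bool (agree \<pi>) * g \<pi>))" if "j \<notin> T" for j
    using that unfolding fiber_sum_def agree_def by (intro sum.cong) auto
  have count: "(\<Sum>j\<in>{1..n} - T. of_bool (\<pi> j = v)) * of_bool (agree \<pi>)
      = (1 - real (card {j\<in>T. \<alpha> j = v})) * of_bool (agree \<pi>)" if \<pi>: "\<pi> \<in> Sym n" for \<pi>
  proof (cases "agree \<pi>")
    case True
    have "(\<Sum>j\<in>T. of_bool (\<pi> j = v)) = (\<Sum>j\<in>T. of_bool (\<alpha> j = v) :: real)"
      using True unfolding agree_def by (intro sum.cong) auto
    then have "(\<Sum>j\<in>T. of_bool (\<pi> j = v)) = real (card {j\<in>T. \<alpha> j = v})"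
      using finT by (simp add: Int_def)
    moreover have "(\<Sum>j\<in>{1..n} - T. of_bool (\<pi> j = v)) + (\<Sum>j\<in>T. of_bool (\<pi> j = v)) = (1 :: real)"
      using sum.subset_diff[OF T finite_atLeastAtMost, of "\<lambda>j. of_bool (\<pi> j = v) :: real"] sum_of_bool_Sym_apply[OF \<pi> v] by linarith
    ultimately show ?thesis by simp
  qed simp
  have "(\<Sum>j\<in>{1..n} - T. fiber_sum n g (insert j T) (\<alpha>(j := v)))
      = (\<Sum>\<pi>\<in>Sym n. (\<Sum>j\<in>{1..n} - T. of_bool (\<pi> j = v)) * of_bool (agree \<pi>) * g \<pi>)"
    using extend by (simp add: sum.swap[of _ "Sym n"] sum_distrib_right mult.assoc)
  also have "\<dots> = (\<Sum>\<pi>\<in>Sym n. (1 - real (card {j\<in>T. \<alpha> j = v})) * (of_bool (agree \<pi>) * g \<pi>))"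
    using count by (intro sum.cong) (simp_all flip: mult.assoc)
  finally show ?thesis by (simp add: fiber_sum_def agree_def sum_distrib_left)
qed

lemma fiber_sum_through_1:
  assumes g: "g \<in> star_eigenspace n (real n - 2)"
    and S: "S \<subseteq> {1..n}" "1 \<in> S" and v: "\<alpha> 1 \<in> {1..n}"
    and vanish: "fiber_sum n g (S - {1}) \<alpha> = 0"
  shows "(real n - 1) * fiber_sum n g S \<alpha> = (\<Sum>j\<in>S - {1}. fiber_sum n g S (\<alpha> \<circ> transpose 1 j))"
proof -
  define T where "T = S - {1}"
  define F where "F j = fiber_sum n g (transpose 1 j ` S) (\<alpha> \<circ> transpose 1 j)" for j
  have finS: "finite S" using S finite_subset by blast
  have inside: "F j = fiber_sum n g S (\<alpha> \<circ> transpose 1 j)" if "j \<in> T" for j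
    using that S(2) by (simp add: F_def T_def)
  have outside: "F j = fiber_sum n g (insert j T) (\<alpha>(j := \<alpha> 1))" if "j \<in> {2..n} - S" for j
  proof -
    have "transpose 1 j ` S = insert j T"
      using that S(2) by (auto simp: T_def transpose_def image_iff)
    then show ?thesis
      unfolding F_def by (simp only:) (rule fiber_sum_cong, use that in \<open>auto simp: T_def\<close>)
  qed
  have "{1..n} - T = insert 1 ({2..n} - S)" "1 \<notin> {2..n} - S" "insert 1 T = S"
    using S by (auto simp: T_def)
  then have "(\<Sum>j\<in>{2..n} - S. F j) = (\<Sum>j\<in>{1..n} - T. fiber_sum n g (insert j T) (\<alpha>(j := \<alpha> 1))) - fiber_sum n g S \<alpha>"
    using outside by (simp add: fiber_sum_cong[of S "\<alpha>(1 := \<alpha> 1)" \<alpha>])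
  also have "\<dots> = - fiber_sum n g S \<alpha>"
  proof -
    have "T \<subseteq> {1..n}" using S by (auto simp: T_def)
    from sum_fiber_sum_extend[OF this v, of g \<alpha>] show ?thesis using vanish by (simp add: T_def)
  qed
  finally have "(\<Sum>j\<in>{2..n} - S. F j) = - fiber_sum n g S \<alpha>" .
  moreover have "(\<Sum>j\<in>{2..n}. F j) = (\<Sum>j\<in>T. F j) + (\<Sum>j\<in>{2..n} - S. F j)"
  proof -
    have "T \<subseteq> {2..n}" "{2..n} - T = {2..n} - S" using S by (auto simp: T_def)
    then show ?thesis using sum.subset_diff[of T "{2..n}" F] by simp
  qed
  moreover have "(real n - 2) * fiber_sum n g S \<alpha> = (\<Sum>j\<in>{2..n}. F j)"
    unfolding F_def by (rule fiber_sum_eigen[OF g])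
  ultimately show ?thesis using inside by (simp add: T_def algebra_simps)
qed

lemma fiber_sum_avoiding_1:
  assumes g: "g \<in> star_eigenspace n (real n - 2)"
    and S: "S \<subseteq> {2..n}" "card S \<ge> 2"
    and vanish: "\<And>T \<beta>. T \<subseteq> {1..n} \<Longrightarrow> 1 \<in> T \<Longrightarrow> card T = card S \<Longrightarrow> fiber_sum n g T \<beta> = 0"
  shows "fiber_sum n g S \<alpha> = 0"
proof -
  define F where "F j = fiber_sum n g (transpose 1 j ` S) (\<alpha> \<circ> transpose 1 j)" for j
  have finS: "finite S" using S finite_subset by blast
  have inside: "F j = 0" if "j \<in> S" for j
  proof -
    have "card (transpose 1 j ` S) = card S" by (simp add: card_image)
    moreover have "1 \<in> transpose 1 j ` S" using that by (metis imageI transpose_apply_second)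
    moreover have "transpose 1 j ` S \<subseteq> {1..n}"
      using S that permutes_in_image[OF transpose_permutes[of j n]] by fastforce
    ultimately show ?thesis unfolding F_def using vanish by blast
  qed
  have outside: "F j = fiber_sum n g S \<alpha>" if "j \<in> {2..n} - S" for j
  proof -
    have "transpose 1 j ` S = S" using that S by (intro transpose_image_eq) auto
    then show ?thesis
      unfolding F_def by (simp only:) (rule fiber_sum_cong, use that S in \<open>force simp: transpose_def\<close>)
  qed
  have "(\<Sum>j\<in>{2..n}. F j) = (\<Sum>j\<in>S. F j) + (\<Sum>j\<in>{2..n} - S. F j)"
    using sum.subset_diff[OF S(1) finite_atLeastAtMost, of F] by simp
  also have "\<dots> = real (n - 1 - card S) * fiber_sum n g S \<alpha>"
    using inside outside S finS by (simp add: card_Diff_subset)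
  finally have "(real n - 2) * fiber_sum n g S \<alpha> = real (n - 1 - card S) * fiber_sum n g S \<alpha>"
    using fiber_sum_eigen[OF g] unfolding F_def by simp
  moreover have "real (n - 1 - card S) = real n - 1 - real (card S)"
    using card_mono[OF _ S(1)] S(2) by (simp add: of_nat_diff)
  ultimately have "(real (card S) - 1) * fiber_sum n g S \<alpha> = 0"
    by (simp add: algebra_simps)
  then show ?thesis using S(2) by simp
qed

lemma cSup_nonpos_if_scaled_bound:
  fixes V :: "real set"
  assumes "bdd_above V" "V \<noteq> {}" "\<And>x. x \<in> V \<Longrightarrow> x \<le> c * Sup V" "c < 1"
  shows "Sup V \<le> 0"
proof -
  have "Sup V \<le> c * Sup V" using assms by (intro cSup_least) auto
  then have "(1 - c) * Sup V \<le> 0" by (simp add: algebra_simps)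
  then show ?thesis using assms(4) by (simp add: mult_le_0_iff)
qed

text \<open>A maximum principle: by \<open>fiber_sum_through_1\<close>, the largest \<open>\<bar>fiber_sum n g S \<alpha>\<bar>\<close> over
  sets \<open>S\<close> of size \<open>m\<close> containing 1 is at most \<open>(m - 1) / (n - 1)\<close> times itself.\<close>
lemma fiber_sum_through_1_vanish:
  assumes g: "g \<in> star_eigenspace n (real n - 2)" and m: "2 \<le> m" "m < n"
    and vanish: "\<And>T \<beta>. T \<subseteq> {1..n} \<Longrightarrow> card T = m - 1 \<Longrightarrow> fiber_sum n g T \<beta> = 0"
    and S: "S \<subseteq> {1..n}" "1 \<in> S" "card S = m"
  shows "fiber_sum n g S \<alpha> = 0"
proof -
  define V where "V = {\<bar>fiber_sum n g S \<alpha>\<bar> | S \<alpha>. S \<subseteq> {1..n} \<and> 1 \<in> S \<and> card S = m}"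
  have bdd: "bdd_above V" unfolding V_def using abs_fiber_sum_le by (intro bdd_aboveI) auto
  have in_V: "\<bar>fiber_sum n g S \<alpha>\<bar> \<in> V" if "S \<subseteq> {1..n}" "1 \<in> S" "card S = m" for S \<alpha>
    using that by (auto simp: V_def)
  have le_Sup: "\<bar>fiber_sum n g S \<alpha>\<bar> \<le> Sup V" if "S \<subseteq> {1..n}" "1 \<in> S" "card S = m" for S \<alpha>
    using cSup_upper[OF in_V[OF that] bdd] .
  have "Sup V \<le> 0"
  proof (rule cSup_nonpos_if_scaled_bound[OF bdd, of "(real m - 1) / (real n - 1)"])
    show "V \<noteq> {}" using in_V[of "{1..m}"] m by auto
    show "(real m - 1) / (real n - 1) < 1" using m by (simp add: field_simps)
    fix x assume "x \<in> V"
    then obtain S \<alpha> where S: "S \<subseteq> {1..n}" "1 \<in> S" "card S = m" and x: "x = \<bar>fiber_sum n g S \<alpha>\<bar>"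
      unfolding V_def by blast
    have "(real n - 1) * x \<le> (real m - 1) * Sup V"
    proof (cases "\<alpha> 1 \<in> {1..n}")
      case False
      have "\<not> (\<forall>p\<in>S. \<pi> p = \<alpha> p)" if "\<pi> \<in> Sym n" for \<pi>
        using S(2) Sym_apply[OF that, of 1] False m by force
      then have "fiber_sum n g S \<alpha> = 0" unfolding fiber_sum_def by (auto intro!: sum.neutral)
      moreover have "Sup V \<ge> 0" using le_Sup[OF S] by (meson abs_ge_zero order_trans)
      ultimately show ?thesis using x m by simp
    next
      case True
      have finS: "finite S" using S finite_subset by blast
      have "fiber_sum n g (S - {1}) \<alpha> = 0" using S finS by (intro vanish) auto
      have "(real n - 1) * x = \<bar>(real n - 1) * fiber_sum n g S \<alpha>\<bar>"
        using x m by (simp add: abs_mult abs_of_nonneg)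
      also have "\<dots> = \<bar>\<Sum>j\<in>S - {1}. fiber_sum n g S (\<alpha> \<circ> transpose 1 j)\<bar>"
        by (simp only: fiber_sum_through_1[OF g S(1,2) True \<open>fiber_sum n g (S - {1}) \<alpha> = 0\<close>])
      also have "\<dots> \<le> (\<Sum>j\<in>S - {1}. Sup V)"
        using le_Sup[OF S] by (intro order_trans[OF sum_abs sum_mono]) auto
      also have "\<dots> = (real m - 1) * Sup V" using S finS m by (simp add: of_nat_diff)
      finally show ?thesis .
    qed
    then show "x \<le> (real m - 1) / (real n - 1) * Sup V" using m by (simp add: field_simps)
  qed
  then show ?thesis using le_Sup[OF S, of \<alpha>] by simp
qed

definition marginal :: "nat \<Rightarrow> ((nat \<Rightarrow> nat) \<Rightarrow> real) \<Rightarrow> nat \<Rightarrow> nat \<Rightarrow> real" where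
  "marginal n g p a = (\<Sum>\<pi>\<in>Sym n. of_bool (\<pi> p = a) * g \<pi>)"

lemma fiber_sum_singleton: "fiber_sum n g {p} \<alpha> = marginal n g p (\<alpha> p)"
  by (simp add: fiber_sum_def marginal_def)

lemma sum_marginal:
  assumes "p \<in> {1..n}"
  shows "(\<Sum>a\<in>{1..n}. marginal n g p a) = (\<Sum>\<pi>\<in>Sym n. g \<pi>)"
proof -
  have one: "(\<Sum>a\<in>{1..n}. of_bool (\<pi> p = a)) = (1 :: real)" if "\<pi> \<in> Sym n" for \<pi>
    using Sym_apply[OF that assms] by (simp add: Int_absorb1 eq_commute[of "\<pi> p"])
  have "(\<Sum>a\<in>{1..n}. marginal n g p a) = (\<Sum>\<pi>\<in>Sym n. (\<Sum>a\<in>{1..n}. of_bool (\<pi> p = a)) * g \<pi>)"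
    unfolding marginal_def by (simp only: sum.swap[of _ "{1..n}"] sum_distrib_right)
  also have "\<dots> = (\<Sum>\<pi>\<in>Sym n. g \<pi>)" using one by simp
  finally show ?thesis .
qed

lemma fiber_sum_vanish:
  assumes g: "g \<in> star_eigenspace n (real n - 2)"
    and marginal: "\<And>p a. p \<in> {1..n} \<Longrightarrow> marginal n g p a = 0"
    and S: "S \<subseteq> {1..n}" "card S < n"
  shows "fiber_sum n g S \<alpha> = 0"
  using S
proof (induction "card S" arbitrary: S \<alpha> rule: nat_less_induct)
  case 1
  then consider (empty) "card S = 0" | (singleton) "card S = 1" | (large) "card S \<ge> 2" by linarith
  then show ?case
  proof cases
    case empty
    with \<open>S \<subseteq> {1..n}\<close> have "S = {}" using finite_subset by fastforce
    then have "fiber_sum n g S \<alpha> = (\<Sum>a\<in>{1..n}. marginal n g 1 a)"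
      using sum_marginal[of 1 n g] empty \<open>card S < n\<close> by (simp add: fiber_sum_def)
    then show ?thesis using marginal empty \<open>card S < n\<close> by simp
  next
    case singleton
    then obtain p where "S = {p}" by (auto simp: card_1_singleton_iff)
    then show ?thesis using marginal \<open>S \<subseteq> {1..n}\<close> by (simp add: fiber_sum_singleton)
  next
    case large
    have vanish: "fiber_sum n g T \<beta> = 0" if "T \<subseteq> {1..n}" "card T = card S - 1" for T \<beta>
    proof -
      have "card T < card S" "card T < n" using that large 1 by auto
      then show ?thesis using 1(1) that by blast
    qed
    show ?thesis
    proof (cases "1 \<in> S")
      case True
      show ?thesis by (rule fiber_sum_through_1_vanish[OF g large _ vanish]) (use 1 True in auto)
    next
      case False
      with 1 have "S \<subseteq> {2..n}" by (auto simp: subset_iff Suc_le_eq order.order_iff_strict)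
      with fiber_sum_avoiding_1[OF g this large] fiber_sum_through_1_vanish[OF g large _ vanish] 1
      show ?thesis by blast
    qed
  qed
qed

lemma Sym_eq_if_agree_but_one:
  assumes \<pi>: "\<pi> \<in> Sym n" and \<sigma>: "\<sigma> \<in> Sym n" and agree: "\<And>p. p \<in> {1..n} - {q} \<Longrightarrow> \<pi> p = \<sigma> p"
  shows "\<pi> = \<sigma>"
proof -
  have \<pi>': "\<pi> permutes {1..n}" and \<sigma>': "\<sigma> permutes {1..n}" using \<pi> \<sigma> by (simp_all add: Sym_def)
  have "inv \<sigma> \<circ> \<pi> permutes {1..n}" by (rule permutes_compose[OF \<pi>' permutes_inv[OF \<sigma>']])
  moreover have "(inv \<sigma> \<circ> \<pi>) p = p" if "p \<in> {1..n} - {q}" for p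
    using agree[OF that] permutes_inverses(2)[OF \<sigma>'] by simp
  ultimately have "inv \<sigma> \<circ> \<pi> permutes {q}" by (rule permutes_superset)
  then have "\<sigma> \<circ> (inv \<sigma> \<circ> \<pi>) = \<sigma>" by simp
  moreover have "\<sigma> \<circ> inv \<sigma> = id" using permutes_surj[OF \<sigma>'] surj_iff by blast
  ultimately show ?thesis by (simp add: o_assoc)
qed

lemma fiber_sum_all_but_one:
  assumes "\<sigma> \<in> Sym n"
  shows "fiber_sum n g ({1..n} - {q}) \<sigma> = g \<sigma>"
proof -
  have "fiber_sum n g ({1..n} - {q}) \<sigma> = (\<Sum>\<pi>\<in>Sym n. if \<pi> = \<sigma> then g \<pi> else 0)"
    unfolding fiber_sum_def using Sym_eq_if_agree_but_one[OF _ assms, of _ q] by (intro sum.cong) force+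
  then show ?thesis using assms Sym_finite by simp
qed

theorem star_eigenfunction_eq_0_if_marginals_vanish:
  assumes g: "g \<in> star_eigenspace n (real n - 2)" and "0 < n"
    and marginal: "\<And>p a. p \<in> {1..n} \<Longrightarrow> marginal n g p a = 0"
    and \<sigma>: "\<sigma> \<in> Sym n"
  shows "g \<sigma> = 0"
proof -
  have "fiber_sum n g ({1..n} - {n}) \<sigma> = 0"
    by (rule fiber_sum_vanish[OF g marginal]) (use \<open>0 < n\<close> in auto)
  then show ?thesis by (simp only: fiber_sum_all_but_one[OF \<sigma>])
qed

lemma marginal_eigen_1:
  assumes "g \<in> star_eigenspace n \<theta>"
  shows "\<theta> * marginal n g 1 a = (\<Sum>j\<in>{2..n}. marginal n g j a)"
  using fiber_sum_eigen[OF assms, of "{1}" "\<lambda>_. a"] by (simp add: fiber_sum_singleton)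

lemma marginal_eigen_1_eq_0:
  assumes "g \<in> star_eigenspace n (real n - 2)" and "2 \<le> n"
  shows "marginal n g 1 a = 0"
proof -
  have "(real n - 2) * marginal n g 2 a = (\<Sum>j\<in>{2..n}. marginal n g (transpose 1 j 2) a)"
    using fiber_sum_eigen[OF assms(1), of "{2}" "\<lambda>_. a"] by (simp add: fiber_sum_singleton)
  also have "\<dots> = (real n - 2) * marginal n g 2 a + marginal n g 1 a"
    using assms(2) sum_transpose_apply[of 2 n "\<lambda>q. marginal n g q a"] by simp
  finally show ?thesis by simp
qed

lemma marginal_out_of_range:
  assumes "p \<in> {1..n}" "a \<notin> {1..n}"
  shows "marginal n g p a = 0"
  using Sym_apply[OF _ assms(1)] assms(2) unfolding marginal_def by (auto intro!: sum.neutral)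

lemma marginal_diff: "marginal n (\<lambda>\<pi>. f \<pi> - h \<pi>) p a = marginal n f p a - marginal n h p a"
  unfolding marginal_def by (simp add: algebra_simps sum_subtractf)

lemma fstar_eq:
  assumes "inj \<pi>" "j \<noteq> k"
  shows "fstar i j k \<pi> = of_bool (\<pi> j = i) - of_bool (\<pi> k = i)"
  using assms by (auto simp: fstar_def inj_eq)

lemma fstar_in_star_eigenspace:
  assumes "j \<in> {2..n}" "k \<in> {2..n}" "j \<noteq> k"
  shows "fstar i j k \<in> star_eigenspace n (real n - 2)"
  unfolding star_eigenspace_iff
proof
  fix \<pi> assume \<pi>: "\<pi> \<in> Sym n"
  define h where "h q = (of_bool (\<pi> q = i) :: real)" for q
  have "(\<Sum>l\<in>{2..n}. fstar i j k (\<pi> \<circ> transpose 1 l))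
      = (\<Sum>l\<in>{2..n}. h (transpose 1 l j)) - (\<Sum>l\<in>{2..n}. h (transpose 1 l k))"
    unfolding sum_subtractf[symmetric]
  proof (rule sum.cong[OF refl])
    fix l assume "l \<in> {2..n}"
    then have "inj (\<pi> \<circ> transpose 1 l)" using \<pi> by (intro Sym_inj comp_in_Sym transpose_permutes) auto
    then show "fstar i j k (\<pi> \<circ> transpose 1 l) = h (transpose 1 l j) - h (transpose 1 l k)"
      using assms(3) by (simp add: fstar_eq h_def)
  qed
  also have "\<dots> = (real n - 2) * (h j - h k)"
    using assms sum_transpose_apply[of j n h] sum_transpose_apply[of k n h] by (simp add: algebra_simps)
  finally show "(real n - 2) * fstar i j k \<pi> = (\<Sum>l\<in>{2..n}. fstar i j k (\<pi> \<circ> transpose 1 l))"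
    using assms \<pi> by (simp add: h_def fstar_eq Sym_inj)
qed

section \<open>Permutations with two prescribed values\<close>

definition pair_count :: "nat \<Rightarrow> nat \<Rightarrow> nat \<Rightarrow> nat \<Rightarrow> nat \<Rightarrow> nat" where
  "pair_count n p a q b = card {\<pi>\<in>Sym n. \<pi> p = a \<and> \<pi> q = b}"

lemma pair_count_conv_sum:
  "real (pair_count n p a q b) = (\<Sum>\<pi>\<in>Sym n. of_bool (\<pi> p = a \<and> \<pi> q = b))"
  by (simp add: pair_count_def Sym_finite Int_def)

lemma pair_count_compose_right:
  assumes "\<tau> permutes {1..n}"
  shows "pair_count n (\<tau> p) a (\<tau> q) b = pair_count n p a q b"
proof -
  have "real (pair_count n (\<tau> p) a (\<tau> q) b) = (\<Sum>\<pi>\<in>Sym n. of_bool ((\<pi> \<circ> \<tau>) p = a \<and> (\<pi> \<circ> \<tau>) q = b))"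
    by (simp add: pair_count_conv_sum)
  also have "\<dots> = real (pair_count n p a q b)"
    unfolding pair_count_conv_sum by (rule sum_Sym_compose_right[OF assms])
  finally show ?thesis by (simp only: of_nat_eq_iff)
qed

lemma pair_count_compose_left:
  assumes "\<sigma> permutes {1..n}"
  shows "pair_count n p (\<sigma> a) q (\<sigma> b) = pair_count n p a q b"
proof -
  have "real (pair_count n p (\<sigma> a) q (\<sigma> b)) = (\<Sum>\<pi>\<in>Sym n. of_bool ((\<sigma> \<circ> \<pi>) p = \<sigma> a \<and> (\<sigma> \<circ> \<pi>) q = \<sigma> b))"
    unfolding pair_count_conv_sum by (rule sum_Sym_compose_left[OF assms, symmetric])
  also have "\<dots> = real (pair_count n p a q b)"
    using permutes_inj[OF assms] by (simp add: pair_count_conv_sum inj_eq)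
  finally show ?thesis by (simp only: of_nat_eq_iff)
qed

lemma exists_permutes_map_pair:
  assumes "p \<in> S" "q \<in> S" "p' \<in> S" "q' \<in> S" "p \<noteq> q" "p' \<noteq> q'"
  obtains \<tau> where "\<tau> permutes S" "\<tau> p = p'" "\<tau> q = q'"
proof
  define r where "r = transpose p p' q"
  have r: "r \<in> S" "r \<noteq> p'" using assms by (auto simp: r_def transpose_def)
  show "transpose q' r \<circ> transpose p p' permutes S"
    using assms r by (intro permutes_compose permutes_swap_id)
  show "(transpose q' r \<circ> transpose p p') p = p'" "(transpose q' r \<circ> transpose p p') q = q'"
    using assms r by (simp_all add: r_def)
qed

lemma pair_count_eq:
  assumes "p \<in> {1..n}" "q \<in> {1..n}" "a \<in> {1..n}" "b \<in> {1..n}" "p \<noteq> q" "a \<noteq> b"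
  shows "pair_count n p a q b = pair_count n 1 1 2 2"
proof -
  have "1 \<in> {1..n}" "2 \<in> {1..n}" using assms by auto
  obtain \<tau> where \<tau>: "\<tau> permutes {1..n}" "\<tau> 1 = p" "\<tau> 2 = q"
    using exists_permutes_map_pair[OF \<open>1 \<in> _\<close> \<open>2 \<in> _\<close> assms(1,2)] assms by auto
  obtain \<sigma> where \<sigma>: "\<sigma> permutes {1..n}" "\<sigma> 1 = a" "\<sigma> 2 = b"
    using exists_permutes_map_pair[OF \<open>1 \<in> _\<close> \<open>2 \<in> _\<close> assms(3,4)] assms by auto
  show ?thesis
    using pair_count_compose_right[OF \<tau>(1), of 1 a 2 b] pair_count_compose_left[OF \<sigma>(1), of 1 1 2 2] \<tau> \<sigma>
    by simp
qed

lemma pair_count_pos: "0 < pair_count n 1 1 2 2"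
proof -
  have "id \<in> {\<pi>\<in>Sym n. \<pi> 1 = 1 \<and> \<pi> 2 = 2}" by (simp add: id_in_Sym)
  moreover have "finite {\<pi>\<in>Sym n. \<pi> 1 = 1 \<and> \<pi> 2 = 2}" using Sym_finite by simp
  ultimately show ?thesis unfolding pair_count_def using card_gt_0_iff by blast
qed

lemma pair_count_same_value: "p \<noteq> q \<Longrightarrow> pair_count n p a q a = 0"
  unfolding pair_count_def by (metis (mono_tags, lifting) Sym_inj card.empty empty_Collect_eq injD)

lemma pair_count_diagonal:
  assumes "p \<in> {1..n}" "a \<in> {1..n}" "2 \<le> n"
  shows "real (pair_count n p a p a) = (real n - 1) * real (pair_count n 1 1 2 2)"
proof -
  define q where "q = (if p = 1 then 2 else (1::nat))"
  have q: "q \<in> {1..n}" "q \<noteq> p" using assms by (auto simp: q_def)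
  have "real (pair_count n p a p a) = (\<Sum>\<pi>\<in>Sym n. \<Sum>b\<in>{1..n}. of_bool (\<pi> p = a \<and> \<pi> q = b))"
    unfolding pair_count_conv_sum
  proof (rule sum.cong[OF refl])
    fix \<pi> assume "\<pi> \<in> Sym n"
    then have "{1..n} \<inter> {b. \<pi> q = b} = {\<pi> q}" using Sym_apply q by auto
    then show "of_bool (\<pi> p = a \<and> \<pi> p = a) = (\<Sum>b\<in>{1..n}. of_bool (\<pi> p = a \<and> \<pi> q = b) :: real)"
      by (simp add: of_bool_conj flip: sum_distrib_left)
  qed
  also have "\<dots> = (\<Sum>b\<in>{1..n}. real (pair_count n p a q b))"
    unfolding pair_count_conv_sum by (rule sum.swap)
  also have "\<dots> = (\<Sum>b\<in>{1..n} - {a}. real (pair_count n p a q b))"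
    using assms pair_count_same_value[of p q n a] q by (simp add: sum.remove[of _ a])
  also have "\<dots> = (\<Sum>b\<in>{1..n} - {a}. real (pair_count n 1 1 2 2))"
    using assms q pair_count_eq[of p n q a] by (intro sum.cong) auto
  finally show ?thesis using assms by (simp add: of_nat_diff)
qed

lemma pair_count_value:
  assumes "p \<in> {1..n}" "q \<in> {1..n}" "b \<in> {1..n}" "2 \<le> n"
  shows "real (pair_count n p a q b) =
    (if a \<notin> {1..n} then 0
     else if p = q then of_bool (a = b) * (real n - 1) * real (pair_count n 1 1 2 2)
     else of_bool (a \<noteq> b) * real (pair_count n 1 1 2 2))"
proof -
  have "pair_count n p a q b = 0" if "a \<notin> {1..n}"
  proof -
    have "{\<pi>\<in>Sym n. \<pi> p = a \<and> \<pi> q = b} = {}"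
      using that Sym_apply[OF _ assms(1)] by blast
    then show ?thesis unfolding pair_count_def by (metis card.empty)
  qed
  moreover have "p = q \<Longrightarrow> a \<noteq> b \<Longrightarrow> pair_count n p a q b = 0"
    unfolding pair_count_def by (metis (mono_tags, lifting) card.empty empty_Collect_eq)
  ultimately show ?thesis
    using assms pair_count_diagonal[of p n a] pair_count_eq[of p n q a b] pair_count_same_value[of p q n a]
    by auto
qed

section \<open>Marginals of the \<open>fstar\<close> and the basis property\<close>

lemma marginal_fstar:
  assumes "i \<in> {1..n}" "j \<in> {1..n}" "k \<in> {1..n}" "j \<noteq> k" "p \<in> {1..n}" "2 \<le> n"
  shows "marginal n (fstar i j k) p a =
    (if a \<in> {1..n} then (of_bool (p = j) - of_bool (p = k)) * real (pair_count n 1 1 2 2) * (real n * of_bool (a = i) - 1)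
     else 0)"
proof -
  have "marginal n (fstar i j k) p a = real (pair_count n p a j i) - real (pair_count n p a k i)"
    unfolding marginal_def pair_count_conv_sum sum_subtractf[symmetric] using assms(4)
    by (intro sum.cong) (auto simp: fstar_eq Sym_inj)
  then show ?thesis
    using assms pair_count_value[of p n j i a] pair_count_value[of p n k i a] by (auto simp: algebra_simps)
qed

lemma marginal_lincomb:
  "marginal n (\<lambda>\<pi>. \<Sum>x\<in>I. c x * h x \<pi>) p a = (\<Sum>x\<in>I. c x * marginal n (h x) p a)"
  unfolding marginal_def by (simp add: algebra_simps sum_distrib_left sum.swap[of _ "Sym n"])

text \<open>The closed form of \<open>\<Sum>i\<in>{2..n}. c (i, k) * (n * of_bool (a = i) - 1)\<close>, the factor
  that column \<open>k\<close> of \<open>c\<close> contributes to the marginals of \<open>\<Sum>c (i, k) * fstar i 2 k\<close>.\<close>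
definition column_deviation :: "nat \<Rightarrow> (nat \<times> nat \<Rightarrow> real) \<Rightarrow> nat \<Rightarrow> nat \<Rightarrow> real" where
  "column_deviation n c k a = (if a \<in> {2..n} then real n * c (a, k) else 0) - (\<Sum>i\<in>{2..n}. c (i, k))"

lemma marginal_fstar_lincomb:
  assumes "p \<in> {1..n}" "a \<in> {1..n}" "3 \<le> n"
  shows "marginal n (\<lambda>\<pi>. \<Sum>(i, k)\<in>{2..n} \<times> {3..n}. c (i, k) * fstar i 2 k \<pi>) p a
    = real (pair_count n 1 1 2 2) * (\<Sum>k\<in>{3..n}. (of_bool (p = 2) - of_bool (p = k)) * column_deviation n c k a)"
proof -
  have col: "(\<Sum>i\<in>{2..n}. c (i, k) * (real n * of_bool (a = i) - 1)) = column_deviation n c k a" for k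
  proof -
    have "(\<Sum>i\<in>{2..n}. c (i, k) * (real n * of_bool (a = i) - 1))
        = (\<Sum>i\<in>{2..n}. real n * (if a = i then c (i, k) else 0) - c (i, k))"
      by (intro sum.cong) (auto simp: algebra_simps)
    also have "\<dots> = real n * (\<Sum>i\<in>{2..n}. if a = i then c (i, k) else 0) - (\<Sum>i\<in>{2..n}. c (i, k))"
      by (simp only: sum_subtractf sum_distrib_left)
    finally show ?thesis by (simp add: column_deviation_def)
  qed
  have "marginal n (\<lambda>\<pi>. \<Sum>(i, k)\<in>{2..n} \<times> {3..n}. c (i, k) * fstar i 2 k \<pi>) p a
      = (\<Sum>(i, k)\<in>{2..n} \<times> {3..n}. c (i, k) * marginal n (fstar i 2 k) p a)"
    by (simp add: case_prod_unfold marginal_lincomb)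
  also have "\<dots> = (\<Sum>k\<in>{3..n}. \<Sum>i\<in>{2..n}. real (pair_count n 1 1 2 2) * (of_bool (p = 2) - of_bool (p = k))
            * (c (i, k) * (real n * of_bool (a = i) - 1)))"
    using assms by (subst sum.cartesian_product[symmetric], subst sum.swap)
      (intro sum.cong refl, simp add: marginal_fstar)
  also have "\<dots> = real (pair_count n 1 1 2 2) * (\<Sum>k\<in>{3..n}. (of_bool (p = 2) - of_bool (p = k)) * column_deviation n c k a)"
    by (simp add: sum_distrib_left col[symmetric] mult.assoc)
  finally show ?thesis .
qed

lemma sum_position_weights:
  fixes p n :: nat
  shows "(\<Sum>k\<in>{3..n}. (of_bool (p = 2) - of_bool (p = k)) * h k) =
    (if p = 2 then (\<Sum>k\<in>{3..n}. h k) else if p \<in> {3..n} then - h p else (0 :: real))"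
proof (cases "p = 2")
  case True
  then show ?thesis by simp
next
  case False
  then have "(\<Sum>k\<in>{3..n}. (of_bool (p = 2) - of_bool (p = k)) * h k) = (\<Sum>k\<in>{3..n}. - (if p = k then h k else 0))"
    by (intro sum.cong) auto
  also have "\<dots> = - (\<Sum>k\<in>{3..n}. if p = k then h k else 0)"
    by (rule sum_negf)
  also have "(\<Sum>k\<in>{3..n}. if p = k then h k else 0) = (if p \<in> {3..n} then h p else 0)"
    by simp
  finally show ?thesis using False by simp
qed

lemma fstar_linear_independent:
  assumes n: "3 \<le> n" and ik: "(i0, k0) \<in> {2..n} \<times> {3..n}"
    and zero: "\<forall>\<pi>\<in>Sym n. (\<Sum>(i, k)\<in>{2..n} \<times> {3..n}. c (i, k) * fstar i 2 k \<pi>) = 0"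
  shows "c (i0, k0) = 0"
proof -
  have dev: "column_deviation n c k0 a = 0" if a: "a \<in> {1..n}" for a
  proof -
    have "0 = marginal n (\<lambda>\<pi>. \<Sum>(i, k)\<in>{2..n} \<times> {3..n}. c (i, k) * fstar i 2 k \<pi>) k0 a"
      using zero by (simp add: marginal_def)
    also have "\<dots> = real (pair_count n 1 1 2 2) *
        (\<Sum>k\<in>{3..n}. (of_bool (k0 = 2) - of_bool (k0 = k)) * column_deviation n c k a)"
      by (rule marginal_fstar_lincomb) (use n ik a in auto)
    also have "\<dots> = - real (pair_count n 1 1 2 2) * column_deviation n c k0 a"
      using ik by (simp only: sum_position_weights) simp
    finally show ?thesis using pair_count_pos[of n] by simp
  qed
  have "(\<Sum>i\<in>{2..n}. c (i, k0)) = 0" using dev[of 1] n by (simp add: column_deviation_def)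
  then show ?thesis using dev[of i0] ik by (simp add: column_deviation_def)
qed

lemma column_deviation_eq:
  assumes "(\<Sum>a\<in>{1..n}. m a) = 0" "2 \<le> n" "a \<in> {1..n}"
    and c: "\<And>i. c (i, k) = (m 1 - m i) / real n"
  shows "column_deviation n c k a = - m a"
proof -
  have "{1..n} = insert 1 {2..n}" using assms(2) by auto
  then have "(\<Sum>i\<in>{2..n}. m i) = - m 1" using assms(1) by simp
  then have "(\<Sum>i\<in>{2..n}. c (i, k)) = m 1"
    using assms(2) by (simp add: c sum_divide_distrib[symmetric] sum_subtractf of_nat_diff field_simps)
  moreover have "real n \<noteq> 0" using assms(2) by simp
  ultimately show ?thesis
    using assms(3) by (cases "a = 1") (auto simp: column_deviation_def c field_simps)
qed

lemma fstar_spanning: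
  assumes n: "3 \<le> n" and f: "f \<in> star_eigenspace n (real n - 2)"
  obtains c where "\<forall>\<pi>\<in>Sym n. f \<pi> = (\<Sum>(i, k)\<in>{2..n} \<times> {3..n}. c (i, k) * fstar i 2 k \<pi>)"
proof
  define B where "B = real (pair_count n 1 1 2 2)"
  define M where "M = marginal n f"
  \<comment> \<open>chosen so that \<open>column_deviation n c k a = - M k a / B\<close>, i.e. \<open>F\<close> has the marginals of \<open>f\<close>\<close>
  define c where "c = (\<lambda>(i, k). (M k 1 - M k i) / (real n * B))"
  define F where "F \<pi> = (\<Sum>(i, k)\<in>{2..n} \<times> {3..n}. c (i, k) * fstar i 2 k \<pi>)" for \<pi>
  have B: "B > 0" using pair_count_pos by (simp add: B_def)
  have M1: "M 1 a = 0" for a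
    unfolding M_def using marginal_eigen_1_eq_0[OF f] n by simp
  have M_rows: "(\<Sum>j\<in>{2..n}. M j a) = 0" for a
    using marginal_eigen_1[OF f, of a] M1[of a] by (simp add: M_def)
  have M_cols: "(\<Sum>a\<in>{1..n}. M k a / B) = 0" if "k \<in> {1..n}" for k
    using sum_marginal[OF that, of f] sum_marginal[of 1 n f] M1 n
    by (simp add: M_def flip: sum_divide_distrib)
  have F_marginal: "marginal n F p a = M p a" if p: "p \<in> {1..n}" and a: "a \<in> {1..n}" for p a
  proof -
    have dev: "column_deviation n c k a = - (M k a / B)" if "k \<in> {3..n}" for k
      by (rule column_deviation_eq[OF M_cols]) (use that n a B in \<open>auto simp: c_def field_simps\<close>)
    have "marginal n F p a = B * (\<Sum>k\<in>{3..n}. (of_bool (p = 2) - of_bool (p = k)) * column_deviation n c k a)"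
      unfolding F_def B_def by (rule marginal_fstar_lincomb[OF p a n])
    also have "\<dots> = (\<Sum>k\<in>{3..n}. - ((of_bool (p = 2) - of_bool (p = k)) * M k a))"
      unfolding sum_distrib_left using B dev by (intro sum.cong) auto
    also have "\<dots> = - (if p = 2 then (\<Sum>k\<in>{3..n}. M k a) else if p \<in> {3..n} then - M p a else 0)"
      by (simp only: sum_negf sum_position_weights)
    also have "\<dots> = M p a"
    proof -
      have "{2..n} = insert 2 {3..n}" using n by auto
      then show ?thesis using M_rows[of a] M1[of a] p by (cases "p = 1") auto
    qed
    finally show ?thesis .
  qed
  have eigen: "(\<lambda>\<pi>. f \<pi> - F \<pi>) \<in> star_eigenspace n (real n - 2)"
    unfolding F_def case_prod_unfold
    by (rule star_eigenspace_diff_lincomb[OF f fstar_in_star_eigenspace]) auto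
  have marginals: "marginal n (\<lambda>\<pi>. f \<pi> - F \<pi>) p a = 0" if "p \<in> {1..n}" for p a
    using that F_marginal marginal_out_of_range[OF that]
    by (cases "a \<in> {1..n}") (simp_all add: marginal_diff M_def)
  have "f \<pi> - F \<pi> = 0" if "\<pi> \<in> Sym n" for \<pi>
    using star_eigenfunction_eq_0_if_marginals_vanish[OF eigen _ marginals that] n by simp
  then show "\<forall>\<pi>\<in>Sym n. f \<pi> = F \<pi>" by simp
qed

theorem lemma15:
  fixes n :: nat
  assumes "n \<ge> 3"
  defines "I \<equiv> {2..n} \<times> {3..n}"
  shows "(\<forall>(i,k)\<in>I. fstar i 2 k \<in> star_eigenspace n (real n - 2))
   \<and> (\<forall>c :: nat \<times> nat \<Rightarrow> real.
         (\<forall>p\<in>Sym n. (\<Sum>(i,k)\<in>I. c (i,k) * fstar i 2 k p) = 0) \<longrightarrow> (\<forall>ik\<in>I. c ik = 0))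
   \<and> (\<forall>f\<in>star_eigenspace n (real n - 2). \<exists>c :: nat \<times> nat \<Rightarrow> real.
         \<forall>p\<in>Sym n. f p = (\<Sum>(i,k)\<in>I. c (i,k) * fstar i 2 k p))"
proof (intro conjI)
  show "\<forall>(i,k)\<in>I. fstar i 2 k \<in> star_eigenspace n (real n - 2)"
    by (auto simp: I_def intro: fstar_in_star_eigenspace)
  show "\<forall>c. (\<forall>p\<in>Sym n. (\<Sum>(i,k)\<in>I. c (i,k) * fstar i 2 k p) = 0) \<longrightarrow> (\<forall>ik\<in>I. c ik = 0)"
  proof (intro allI impI ballI)
    fix c ik assume "\<forall>p\<in>Sym n. (\<Sum>(i,k)\<in>I. c (i,k) * fstar i 2 k p) = 0" "ik \<in> I"
    then show "c ik = 0"
      unfolding I_def by (cases ik) (simp only: fstar_linear_independent[OF assms(1)])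
  qed
  show "\<forall>f\<in>star_eigenspace n (real n - 2). \<exists>c. \<forall>p\<in>Sym n. f p = (\<Sum>(i,k)\<in>I. c (i,k) * fstar i 2 k p)"
  proof
    fix f assume "f \<in> star_eigenspace n (real n - 2)"
    from fstar_spanning[OF assms(1) this] show "\<exists>c. \<forall>p\<in>Sym n. f p = (\<Sum>(i,k)\<in>I. c (i,k) * fstar i 2 k p)"
      unfolding I_def by blast
  qed
qed

end
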